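(* Let $\beta>0$, $t>0$ and let $\gamma$ be a path in the time interval $[0,t]$ with at most $\beta t$ jumps. Then there are at least $\frac{\sqrt t}{4}-1$ disjoint time intervals contained in $[0,\frac t2]$ that are favorable for $\gamma$.
   Context: A path in the time interval $[0,t]$ is a finite sequence of space-time points in $\mathbb{Z}\times[0,t]$ with nondecreasing times, whose consecutive segments are either vertical (same site) or horizontal jumps between neighbouring sites at a fixed time; its jumps are these horizontal segments. A time interval $[s-\sqrt t,s)\subseteq[0,t]$ is favorable for $\gamma$ if for every $u\in[s-\sqrt t,s)$ the number of jumps of $\gamma$ during $[u,s)$ is at most $4\beta|s-u|$. *)

theory Defs
  imports Complex_Main
begin

text \<open>A path is a finite list of space-time points (site, time) in Z x [0,t];
  times are nondecreasing and consecutive segments are vertical (same site) or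
  horizontal jumps between neighbouring sites at a fixed time.\<close>

definition is_jump :: "(int \<times> real) list \<Rightarrow> nat \<Rightarrow> bool" where
  "is_jump \<gamma> i \<longleftrightarrow> snd (\<gamma> ! i) = snd (\<gamma> ! Suc i) \<and> \<bar>fst (\<gamma> ! i) - fst (\<gamma> ! Suc i)\<bar> = 1"

definition is_path :: "real \<Rightarrow> (int \<times> real) list \<Rightarrow> bool" where
  "is_path t \<gamma> \<longleftrightarrow> \<gamma> \<noteq> [] \<and> (\<forall>p\<in>set \<gamma>. 0 \<le> snd p \<and> snd p \<le> t) \<and>
     (\<forall>i. Suc i < length \<gamma> \<longrightarrow> snd (\<gamma> ! i) \<le> snd (\<gamma> ! Suc i) \<and>
        (fst (\<gamma> ! i) = fst (\<gamma> ! Suc i) \<or> is_jump \<gamma> i))"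

definition jumps_in :: "(int \<times> real) list \<Rightarrow> real set \<Rightarrow> nat" where
  "jumps_in \<gamma> A = card {i. Suc i < length \<gamma> \<and> is_jump \<gamma> i \<and> snd (\<gamma> ! i) \<in> A}"

definition num_jumps :: "(int \<times> real) list \<Rightarrow> nat" where
  "num_jumps \<gamma> = jumps_in \<gamma> UNIV"

definition favorable :: "real \<Rightarrow> real \<Rightarrow> (int \<times> real) list \<Rightarrow> real \<Rightarrow> bool" where
  "favorable \<beta> t \<gamma> s \<longleftrightarrow> {s - sqrt t..<s} \<subseteq> {0..t} \<and>
     (\<forall>u\<in>{s - sqrt t..<s}. real (jumps_in \<gamma> {u..<s}) \<le> 4 * \<beta> * \<bar>s - u\<bar>)"

end

theory Submission
  imports Defs
begin

text \<open>Let \<open>N x\<close> count the jumps before time \<open>x\<close> and \<open>F x = 4\<beta>x - N x\<close>. Since \<open>F\<close> rises with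
  slope \<open>4\<beta>\<close> and only drops at jumps, at the first time \<open>s\<close> where \<open>F\<close> reaches a level \<open>y\<close> we have
  \<open>F u < y \<le> F s\<close> for all \<open>u < s\<close>, i.e. fewer than \<open>4\<beta>(s - u)\<close> jumps in \<open>[u, s)\<close>. First passage
  times of levels \<open>y\<^sub>j = 4\<beta> j \<surd>t\<close> are at least \<open>\<surd>t\<close> apart, and since at most \<open>\<beta>t\<close> jumps occur,
  \<open>F (t/2) \<ge> \<beta>t\<close>, so the levels \<open>j = 1, \<dots>, \<lfloor>\<surd>t/4\<rfloor>\<close> are all reached before \<open>t/2\<close>.\<close>

definition first_passage :: "real \<Rightarrow> (real \<Rightarrow> nat) \<Rightarrow> real \<Rightarrow> real \<Rightarrow> bool" where
  "first_passage c N y s \<longleftrightarrow> y \<le> c * s - real (N s) \<and> (\<forall>v<s. c * v - real (N v) < y)"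

lemma first_passage_exists:
  fixes N :: "real \<Rightarrow> nat"
  assumes "mono N" and "c > 0" and "y \<le> c * u - real (N u)"
  obtains s where "s \<le> u" and "first_passage c N y s"
proof -
  \<comment> \<open>\<open>F\<close> can first reach \<open>y\<close> only at one of the finitely many times \<open>(y + k)/c\<close>, \<open>k \<le> N u\<close>.\<close>
  define C where "C = {x \<in> (\<lambda>k. (y + real k) / c) ` {..N u}. y \<le> c * x - real (N x)}"
  have finite_C: "finite C" by (simp add: C_def)
  have candidate: "(y + real (N v)) / c \<in> C \<and> (y + real (N v)) / c \<le> v"
    if "v \<le> u" and "y \<le> c * v - real (N v)" for v
  proof -
    have le_v: "(y + real (N v)) / c \<le> v" using that assms(2) by (simp add: field_simps)
    then have "N ((y + real (N v)) / c) \<le> N v" by (rule monoD[OF assms(1)])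
    moreover have "N v \<le> N u" using that(1) by (rule monoD[OF assms(1)])
    ultimately show ?thesis using le_v assms(2) that(2) unfolding C_def by (auto simp: field_simps)
  qed
  then have C_ne: "C \<noteq> {}" using assms(3) by blast
  show thesis
  proof
    show Min_le_u: "Min C \<le> u"
      using candidate[OF order_refl assms(3)] Min_le[OF finite_C] by (blast intro: order_trans)
    have "Min C \<in> C" using finite_C C_ne by (rule Min_in)
    moreover have "c * v - real (N v) < y" if "v < Min C" for v
    proof (rule ccontr)
      assume "\<not> c * v - real (N v) < y"
      then have "(y + real (N v)) / c \<in> C \<and> (y + real (N v)) / c \<le> v"
        using that Min_le_u by (intro candidate) auto
      then show False using that Min_le[OF finite_C] by fastforce
    qed
    ultimately show "first_passage c N y (Min C)" unfolding first_passage_def C_def by blast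
  qed
qed

lemma first_passage_increment_less:
  assumes "first_passage c N y s" and "u < s"
  shows "real (N s) - real (N u) < c * (s - u)"
  using assms unfolding first_passage_def by (auto simp: algebra_simps)

lemma first_passage_ge_level:
  assumes "first_passage c N y s"
  shows "y \<le> c * s"
  using assms unfolding first_passage_def by linarith

lemma first_passage_separated:
  assumes "mono N" and "first_passage c N y s" and "first_passage c N y' s'"
    and "L \<ge> 0" and "y + c * L \<le> y'"
  shows "s \<le> s' - L"
proof (rule ccontr)
  assume "\<not> s \<le> s' - L"
  then have "c * (s' - L) - real (N (s' - L)) < y" using assms(2) unfolding first_passage_def by auto
  moreover have "N (s' - L) \<le> N s'" using assms(1,4) by (simp add: monoD)
  ultimately show False using assms(3,5) unfolding first_passage_def by (auto simp: algebra_simps)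
qed

lemma first_passages_of_levels:
  fixes N :: "real \<Rightarrow> nat"
  assumes "mono N" and "c > 0" and "L \<ge> 0" and "c * real K * L \<le> c * u - real (N u)"
  obtains s where "\<And>j. j \<in> {1..K} \<Longrightarrow> s j \<le> u \<and> first_passage c N (c * real j * L) (s j)"
    and "\<And>i j. i \<in> {1..K} \<Longrightarrow> j \<in> {1..K} \<Longrightarrow> i < j \<Longrightarrow> s i \<le> s j - L"
proof -
  have "\<forall>j\<in>{1..K}. \<exists>s. s \<le> u \<and> first_passage c N (c * real j * L) s"
  proof
    fix j :: nat assume "j \<in> {1..K}"
    then have "c * real j * L \<le> c * real K * L" using assms(2,3) by (simp add: mult_right_mono)
    then have "c * real j * L \<le> c * u - real (N u)" using assms(4) by linarith
    then obtain s where "s \<le> u" "first_passage c N (c * real j * L) s"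
      by (rule first_passage_exists[OF assms(1,2)])
    then show "\<exists>s. s \<le> u \<and> first_passage c N (c * real j * L) s" by blast
  qed
  then obtain s where s: "\<forall>j\<in>{1..K}. s j \<le> u \<and> first_passage c N (c * real j * L) (s j)"
    by (rule bchoice[THEN exE])
  moreover have "s i \<le> s j - L" if "i \<in> {1..K}" "j \<in> {1..K}" "i < j" for i j
  proof (rule first_passage_separated[OF assms(1) _ _ assms(3)])
    have "c * L * (real i + 1) \<le> c * L * real j" using that assms(2,3) by (intro mult_left_mono) auto
    then show "c * real i * L + c * L \<le> c * real j * L" by (simp add: algebra_simps)
  qed (use s that in auto)
  with s show thesis using that by blast
qed

lemma disjoint_first_passage_windows:
  fixes N :: "real \<Rightarrow> nat"
  assumes "mono N" and "c > 0" and "L > 0" and "c * real K * L \<le> c * u - real (N u)"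
  obtains S where "finite S" and "card S = K"
    and "\<And>s. s \<in> S \<Longrightarrow> {s - L..<s} \<subseteq> {0..u} \<and> (\<exists>y. first_passage c N y s)"
    and "\<And>s s'. s \<in> S \<Longrightarrow> s' \<in> S \<Longrightarrow> s \<noteq> s' \<Longrightarrow> {s - L..<s} \<inter> {s' - L..<s'} = {}"
proof -
  obtain s where s: "\<And>j. j \<in> {1..K} \<Longrightarrow> s j \<le> u \<and> first_passage c N (c * real j * L) (s j)"
    and sep: "\<And>i j. i \<in> {1..K} \<Longrightarrow> j \<in> {1..K} \<Longrightarrow> i < j \<Longrightarrow> s i \<le> s j - L"
    using first_passages_of_levels[OF assms(1,2) _ assms(4)] assms(3) by auto
  have window: "{s j - L..<s j} \<subseteq> {0..u}" if "j \<in> {1..K}" for j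
  proof -
    have "c * (real j * L) \<le> c * s j"
      using first_passage_ge_level[of c] s[OF that] by (metis mult.assoc)
    then have "real j * L \<le> s j" using assms(2) by simp
    moreover have "L \<le> real j * L" using that assms(3) by simp
    ultimately have "L \<le> s j" by linarith
    then show ?thesis using s[OF that] by auto
  qed
  have disjoint: "{s i - L..<s i} \<inter> {s j - L..<s j} = {}" if "i \<in> {1..K}" "j \<in> {1..K}" "i \<noteq> j" for i j
    using that sep[of i j] sep[of j i] by (cases "i < j") auto
  have "inj_on s {1..K}"
    using disjoint assms(3) by (intro inj_onI) fastforce
  then have "card (s ` {1..K}) = K" by (simp add: card_image)
  with window disjoint s show thesis by (intro that[of "s ` {1..K}"]) blast+
qed

lemma jumps_in_mono:
  assumes "A \<subseteq> B" shows "jumps_in \<gamma> A \<le> jumps_in \<gamma> B"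
  unfolding jumps_in_def
  by (rule card_mono) (auto intro: finite_subset[of _ "{..<length \<gamma>}"] dest: set_mp[OF assms])

lemma jumps_in_le_num_jumps: "jumps_in \<gamma> A \<le> num_jumps \<gamma>"
  unfolding num_jumps_def by (rule jumps_in_mono) simp

lemma jumps_in_split:
  assumes "u \<le> s"
  shows "jumps_in \<gamma> {..<s} = jumps_in \<gamma> {..<u} + jumps_in \<gamma> {u..<s}"
proof -
  let ?J = "\<lambda>A. {i. Suc i < length \<gamma> \<and> is_jump \<gamma> i \<and> snd (\<gamma> ! i) \<in> A}"
  have split: "?J {..<s} = ?J {..<u} \<union> ?J {u..<s}" using assms by auto
  have finite_J: "\<And>A. finite (?J A)" by (rule finite_subset[of _ "{..<length \<gamma>}"]) auto
  have "card (?J {..<u} \<union> ?J {u..<s}) = card (?J {..<u}) + card (?J {u..<s})"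
    using finite_J[of "{..<u}"] finite_J[of "{u..<s}"] by (intro card_Un_disjoint) auto
  with split show ?thesis unfolding jumps_in_def by simp
qed

lemma mono_jumps_before: "mono (\<lambda>x. jumps_in \<gamma> {..<x})"
  by (rule monoI) (simp add: jumps_in_mono)

lemma favorable_at_first_passage:
  assumes "first_passage (4 * \<beta>) (\<lambda>x. jumps_in \<gamma> {..<x}) y s" and "{s - sqrt t..<s} \<subseteq> {0..t}"
  shows "favorable \<beta> t \<gamma> s"
  unfolding favorable_def
proof (intro conjI ballI)
  fix u assume u: "u \<in> {s - sqrt t..<s}"
  have "jumps_in \<gamma> {..<s} = jumps_in \<gamma> {..<u} + jumps_in \<gamma> {u..<s}"
    using u by (intro jumps_in_split) auto
  then show "real (jumps_in \<gamma> {u..<s}) \<le> 4 * \<beta> * \<bar>s - u\<bar>"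
    using first_passage_increment_less[OF assms(1), of u] u by auto
qed (fact assms(2))

theorem lemma8:
  fixes \<beta> t :: real and \<gamma> :: "(int \<times> real) list"
  assumes "\<beta> > 0" and "t > 0" and "is_path t \<gamma>"
    and "real (num_jumps \<gamma>) \<le> \<beta> * t"
  shows "\<exists>S :: real set. finite S \<and> real (card S) \<ge> sqrt t / 4 - 1 \<and>
    (\<forall>s\<in>S. {s - sqrt t..<s} \<subseteq> {0..t/2} \<and> favorable \<beta> t \<gamma> s) \<and>
    (\<forall>s\<in>S. \<forall>s'\<in>S. s \<noteq> s' \<longrightarrow> {s - sqrt t..<s} \<inter> {s' - sqrt t..<s'} = {})"
proof -
  define L K where "L = sqrt t" and "K = nat \<lfloor>L / 4\<rfloor>"
  have L: "L > 0" "L * L = t" using assms(2) by (simp_all add: L_def)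
  have "4 * \<beta> * real K * L \<le> 4 * \<beta> * (L / 4) * L"
    using L assms(1) unfolding K_def by (intro mult_right_mono mult_left_mono) linarith+
  also have "\<dots> \<le> 4 * \<beta> * (t / 2) - real (jumps_in \<gamma> {..<t / 2})"
    using assms(4) jumps_in_le_num_jumps[of \<gamma> "{..<t / 2}"] L(2)[symmetric] by (simp add: algebra_simps)
  finally obtain S where "finite S" "card S = K"
    and windows: "\<And>s. s \<in> S \<Longrightarrow> {s - L..<s} \<subseteq> {0..t / 2} \<and>
      (\<exists>y. first_passage (4 * \<beta>) (\<lambda>x. jumps_in \<gamma> {..<x}) y s)"
    and "\<And>s s'. s \<in> S \<Longrightarrow> s' \<in> S \<Longrightarrow> s \<noteq> s' \<Longrightarrow> {s - L..<s} \<inter> {s' - L..<s'} = {}"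
    using disjoint_first_passage_windows[OF mono_jumps_before] L(1) assms(1) by (metis mult_pos_pos zero_less_numeral)
  moreover have "real K \<ge> L / 4 - 1" unfolding K_def by linarith
  moreover have "favorable \<beta> t \<gamma> s" if s_in: "s \<in> S" for s
  proof -
    obtain y where "first_passage (4 * \<beta>) (\<lambda>x. jumps_in \<gamma> {..<x}) y s" using windows[OF s_in] by blast
    moreover have "{s - sqrt t..<s} \<subseteq> {0..t}" using windows[OF s_in] assms(2) unfolding L_def by fastforce
    ultimately show ?thesis by (rule favorable_at_first_passage)
  qed
  ultimately show ?thesis using windows unfolding L_def[symmetric] by blast
qed

end
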